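(* Let $\Gamma=\langle V,(w_u)_{u\in V},\alpha,1\rangle$ be a celebrity game with critical distance $\beta=1$. Then $PoA(\Gamma)\le 2$. Moreover, for any two Nash equilibria $S,S'$ of $\Gamma$, $C(S)\le 2\,C(S')$.
   Context: A celebrity game $\Gamma=\langle V,(w_u)_{u\in V},\alpha,\beta\rangle$ consists of a set of players $V=\{1,\dots,n\}$, celebrity weights $w_u>0$, a link cost $\alpha>0$ and a critical distance $\beta$ with $1\le\beta\le n-1$. A strategy of player $u$ is a set $S_u\subseteq V\setminus\{u\}$; a strategy profile is $S=(S_1,\dots,S_n)$; its outcome graph $G[S]$ is the undirected graph on $V$ with edge set $\{\{u,v\}: u\in S_v\text{ or }v\in S_u\}$. With $d_G$ the graph distance (infinite between different connected components), the cost of player $u$ is $c_u(S)=\alpha|S_u|+\sum_{v:\,d_{G[S]}(u,v)>\beta}w_v$ and the social cost is $C(S)=\sum_{u\in V}c_u(S)$. $S$ is a Nash equilibrium if no player can strictly decrease its cost by changing only its own strategy. $\mathrm{opt}(\Gamma)=\min_S C(S)$ and $PoA(\Gamma)=\max_{S\text{ Nash equilibrium}}C(S)/\mathrm{opt}(\Gamma)$. *)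

theory Defs
  imports Complex_Main
begin

definition players :: "nat \<Rightarrow> nat set" where
  "players n = {1..n}"

definition valid_profile :: "nat \<Rightarrow> (nat \<Rightarrow> nat set) \<Rightarrow> bool" where
  "valid_profile n S \<longleftrightarrow> (\<forall>u\<in>players n. S u \<subseteq> players n - {u}) \<and> (\<forall>u. u \<notin> players n \<longrightarrow> S u = {})"

definition adj :: "nat \<Rightarrow> (nat \<Rightarrow> nat set) \<Rightarrow> nat \<Rightarrow> nat \<Rightarrow> bool" where
  "adj n S u v \<longleftrightarrow> u \<in> players n \<and> v \<in> players n \<and> u \<noteq> v \<and> (u \<in> S v \<or> v \<in> S u)"

fun within_dist :: "nat \<Rightarrow> (nat \<Rightarrow> nat set) \<Rightarrow> nat \<Rightarrow> nat \<Rightarrow> nat \<Rightarrow> bool" where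
  "within_dist n S 0 u v \<longleftrightarrow> u = v"
| "within_dist n S (Suc k) u v \<longleftrightarrow> within_dist n S k u v \<or> (\<exists>x. within_dist n S k u x \<and> adj n S x v)"

definition player_cost ::
  "nat \<Rightarrow> (nat \<Rightarrow> real) \<Rightarrow> real \<Rightarrow> nat \<Rightarrow> (nat \<Rightarrow> nat set) \<Rightarrow> nat \<Rightarrow> real" where
  "player_cost n w \<alpha> \<beta> S u =
     \<alpha> * real (card (S u)) + (\<Sum>v\<in>{v\<in>players n. \<not> within_dist n S \<beta> u v}. w v)"

definition social_cost ::
  "nat \<Rightarrow> (nat \<Rightarrow> real) \<Rightarrow> real \<Rightarrow> nat \<Rightarrow> (nat \<Rightarrow> nat set) \<Rightarrow> real" where
  "social_cost n w \<alpha> \<beta> S = (\<Sum>u\<in>players n. player_cost n w \<alpha> \<beta> S u)"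

definition nash_eq ::
  "nat \<Rightarrow> (nat \<Rightarrow> real) \<Rightarrow> real \<Rightarrow> nat \<Rightarrow> (nat \<Rightarrow> nat set) \<Rightarrow> bool" where
  "nash_eq n w \<alpha> \<beta> S \<longleftrightarrow> valid_profile n S \<and>
     (\<forall>u\<in>players n. \<forall>T. T \<subseteq> players n - {u} \<longrightarrow>
        player_cost n w \<alpha> \<beta> S u \<le> player_cost n w \<alpha> \<beta> (S(u := T)) u)"

definition opt :: "nat \<Rightarrow> (nat \<Rightarrow> real) \<Rightarrow> real \<Rightarrow> nat \<Rightarrow> real" where
  "opt n w \<alpha> \<beta> = Inf {social_cost n w \<alpha> \<beta> S | S. valid_profile n S}"

end

theory Submission
  imports Defs
begin

text \<open>With critical distance 1 a player's cost splits over the other players: towards x,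
  player u pays \<alpha> if it buys the link ux, and w x if the link ux is absent altogether.
  Summing u's cost towards x and x's cost towards u gives at least min \<alpha> (w u + w x)
  in every profile, and at most twice that amount in a Nash equilibrium, since each of u, x
  could toggle its own link to x, resp. u.  Summing over all pairs, the social cost of every
  equilibrium is within a factor 2 of the same quantity that bounds every profile from below.\<close>

definition pair_cost :: "(nat \<Rightarrow> real) \<Rightarrow> real \<Rightarrow> (nat \<Rightarrow> nat set) \<Rightarrow> nat \<Rightarrow> nat \<Rightarrow> real" where
  "pair_cost w \<alpha> S u x =
     (if x \<in> S u then \<alpha> else 0) + (if x \<in> S u \<or> u \<in> S x then 0 else w x)"

definition pair_bound_sum :: "nat \<Rightarrow> (nat \<Rightarrow> real) \<Rightarrow> real \<Rightarrow> real" where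
  "pair_bound_sum n w \<alpha> = (\<Sum>u\<in>players n. \<Sum>x\<in>players n - {u}. min \<alpha> (w u + w x))"

lemma finite_players [simp]: "finite (players n)"
  by (simp add: players_def)

lemma sum_off_diagonal_swap:
  assumes "finite A"
  shows "(\<Sum>u\<in>A. \<Sum>x\<in>A - {u}. f u x) = (\<Sum>u\<in>A. \<Sum>x\<in>A - {u}. f x u)"
proof -
  have "\<And>u. A - {u} = {x. x \<in> A \<and> x \<noteq> u}" by blast
  moreover have "\<And>u. {x. x \<in> A \<and> u \<noteq> x} = {x. x \<in> A \<and> x \<noteq> u}" by blast
  ultimately show ?thesis
    using sum.swap_restrict[OF assms assms, of f "\<lambda>u x. u \<noteq> x"] by simp
qed

lemma player_cost_eq_sum_pair_cost:
  assumes u: "u \<in> players n" and Su: "S u \<subseteq> players n - {u}"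
  shows "player_cost n w \<alpha> 1 S u = (\<Sum>x\<in>players n - {u}. pair_cost w \<alpha> S u x)"
proof -
  have links: "\<alpha> * real (card (S u)) = (\<Sum>x\<in>players n - {u}. if x \<in> S u then \<alpha> else 0)"
    using Su by (simp add: sum.If_cases Int_absorb1)
  have "{v \<in> players n. \<not> within_dist n S 1 u v} = {x \<in> players n - {u}. \<not> (x \<in> S u \<or> u \<in> S x)}"
    using u by (auto simp: adj_def)
  then have far: "(\<Sum>v\<in>{v \<in> players n. \<not> within_dist n S 1 u v}. w v)
      = (\<Sum>x\<in>players n - {u}. if x \<in> S u \<or> u \<in> S x then 0 else w x)"
    by (simp add: sum.If_cases Diff_eq Int_def conj_commute)
  show ?thesis
    unfolding player_cost_def pair_cost_def links far by (simp add: sum.distrib)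
qed

lemma two_social_cost_eq_sum_pair_costs:
  assumes "valid_profile n S"
  shows "2 * social_cost n w \<alpha> 1 S
    = (\<Sum>u\<in>players n. \<Sum>x\<in>players n - {u}. pair_cost w \<alpha> S u x + pair_cost w \<alpha> S x u)"
proof -
  have "social_cost n w \<alpha> 1 S = (\<Sum>u\<in>players n. \<Sum>x\<in>players n - {u}. pair_cost w \<alpha> S u x)"
    unfolding social_cost_def
    using assms player_cost_eq_sum_pair_cost by (auto simp: valid_profile_def intro: sum.cong)
  then show ?thesis
    using sum_off_diagonal_swap[OF finite_players, of "pair_cost w \<alpha> S" n]
    by (simp add: sum.distrib)
qed

lemma min_le_pair_costs:
  assumes "\<alpha> > 0" "w u > 0" "w x > 0"
  shows "min \<alpha> (w u + w x) \<le> pair_cost w \<alpha> S u x + pair_cost w \<alpha> S x u"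
  using assms unfolding pair_cost_def by (auto simp: min_def)

text \<open>The deviation removes the link uv if u bought it and buys it otherwise; only the
  term of v in u's cost changes.\<close>

lemma nash_eq_pair_cost_le_toggle:
  assumes ne: "nash_eq n w \<alpha> 1 S" and u: "u \<in> players n" and v: "v \<in> players n" "v \<noteq> u"
  shows "pair_cost w \<alpha> S u v
    \<le> (if v \<in> S u then 0 else \<alpha>) + (if v \<in> S u \<and> u \<notin> S v then w v else 0)"
proof -
  have Su: "S u \<subseteq> players n - {u}"
    using ne u by (auto simp: nash_eq_def valid_profile_def)
  define T where "T = (if v \<in> S u then S u - {v} else insert v (S u))"
  have T: "T \<subseteq> players n - {u}" using Su v unfolding T_def by auto
  have "player_cost n w \<alpha> 1 S u \<le> player_cost n w \<alpha> 1 (S(u := T)) u"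
    using ne u T unfolding nash_eq_def by blast
  moreover have "player_cost n w \<alpha> 1 S' u
      = pair_cost w \<alpha> S' u v + (\<Sum>x\<in>players n - {u} - {v}. pair_cost w \<alpha> S' u x)"
    if "S' u \<subseteq> players n - {u}" for S'
    using player_cost_eq_sum_pair_cost[of u n S', OF u that] v by (simp add: sum.remove)
  moreover have "(\<Sum>x\<in>players n - {u} - {v}. pair_cost w \<alpha> (S(u := T)) u x)
      = (\<Sum>x\<in>players n - {u} - {v}. pair_cost w \<alpha> S u x)"
    by (rule sum.cong) (auto simp: pair_cost_def T_def)
  moreover have "pair_cost w \<alpha> (S(u := T)) u v
      = (if v \<in> S u then 0 else \<alpha>) + (if v \<in> S u \<and> u \<notin> S v then w v else 0)"
    using v by (auto simp: pair_cost_def T_def)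
  ultimately show ?thesis using Su T by fastforce
qed

lemma nash_eq_pair_costs_le_two_min:
  assumes ne: "nash_eq n w \<alpha> 1 S" and u: "u \<in> players n" and v: "v \<in> players n" "v \<noteq> u"
    and "\<alpha> > 0" "w u > 0" "w v > 0"
  shows "pair_cost w \<alpha> S u v + pair_cost w \<alpha> S v u \<le> 2 * min \<alpha> (w u + w v)"
  using nash_eq_pair_cost_le_toggle[OF ne u v] nash_eq_pair_cost_le_toggle[OF ne v(1) u] v(2) assms
  unfolding pair_cost_def by (auto simp: min_def split: if_splits)

lemma pair_bound_sum_le_two_social_cost:
  assumes "valid_profile n S" "\<alpha> > 0" "\<forall>u\<in>players n. w u > 0"
  shows "pair_bound_sum n w \<alpha> \<le> 2 * social_cost n w \<alpha> 1 S"
  unfolding two_social_cost_eq_sum_pair_costs[OF assms(1)] pair_bound_sum_def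
  using assms(2,3) by (intro sum_mono min_le_pair_costs) auto

lemma nash_eq_social_cost_le_pair_bound_sum:
  assumes "nash_eq n w \<alpha> 1 S" "\<alpha> > 0" "\<forall>u\<in>players n. w u > 0"
  shows "social_cost n w \<alpha> 1 S \<le> pair_bound_sum n w \<alpha>"
proof -
  have "2 * social_cost n w \<alpha> 1 S
      \<le> (\<Sum>u\<in>players n. \<Sum>x\<in>players n - {u}. 2 * min \<alpha> (w u + w x))"
    unfolding two_social_cost_eq_sum_pair_costs[OF nash_eq_def[THEN iffD1, OF assms(1), THEN conjunct1]]
    using assms by (intro sum_mono nash_eq_pair_costs_le_two_min) auto
  then show ?thesis
    by (simp add: pair_bound_sum_def sum_distrib_left[symmetric])
qed

lemma pair_bound_sum_pos:
  assumes "2 \<le> n" "\<alpha> > 0" "\<forall>u\<in>players n. w u > 0"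
  shows "pair_bound_sum n w \<alpha> > 0"
proof -
  have "1 \<in> players n" "2 \<in> players n"
    using assms(1) by (auto simp: players_def)
  then have "players n - {u} \<noteq> {}" "players n \<noteq> {}" for u
    by (cases "u = 1"; fastforce)+
  then show ?thesis
    unfolding pair_bound_sum_def using assms(2,3) by (intro sum_pos) (auto simp: add_pos_pos)
qed

lemma pair_bound_sum_le_two_opt:
  assumes "\<alpha> > 0" "\<forall>u\<in>players n. w u > 0"
  shows "pair_bound_sum n w \<alpha> \<le> 2 * opt n w \<alpha> 1"
proof -
  have "valid_profile n (\<lambda>_. {})" by (simp add: valid_profile_def)
  then have "pair_bound_sum n w \<alpha> / 2 \<le> Inf {social_cost n w \<alpha> 1 S | S. valid_profile n S}"
    using pair_bound_sum_le_two_social_cost[OF _ assms] by (intro cInf_greatest) force+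
  then show ?thesis by (simp add: opt_def)
qed

theorem theorem5:
  fixes n :: nat and w :: "nat \<Rightarrow> real" and \<alpha> :: real
  assumes "\<forall>u\<in>players n. w u > 0" and "\<alpha> > 0" and "1 \<le> n - 1"
  shows "(\<forall>S. nash_eq n w \<alpha> 1 S \<longrightarrow> social_cost n w \<alpha> 1 S / opt n w \<alpha> 1 \<le> 2)
       \<and> (\<forall>S S'. nash_eq n w \<alpha> 1 S \<and> nash_eq n w \<alpha> 1 S' \<longrightarrow>
            social_cost n w \<alpha> 1 S \<le> 2 * social_cost n w \<alpha> 1 S')"
proof -
  have "2 \<le> n" using assms(3) by linarith
  then have opt_pos: "opt n w \<alpha> 1 > 0"
    using pair_bound_sum_pos[of n \<alpha> w] pair_bound_sum_le_two_opt[of \<alpha> n w] assms by simp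
  have ne_le: "social_cost n w \<alpha> 1 S \<le> pair_bound_sum n w \<alpha>" if "nash_eq n w \<alpha> 1 S" for S
    using nash_eq_social_cost_le_pair_bound_sum that assms by blast
  have "social_cost n w \<alpha> 1 S / opt n w \<alpha> 1 \<le> 2" if "nash_eq n w \<alpha> 1 S" for S
    using ne_le[OF that] pair_bound_sum_le_two_opt[of \<alpha> n w] assms opt_pos
    by (simp add: divide_le_eq)
  moreover have "social_cost n w \<alpha> 1 S \<le> 2 * social_cost n w \<alpha> 1 S'"
    if "nash_eq n w \<alpha> 1 S" "nash_eq n w \<alpha> 1 S'" for S S'
    using ne_le[OF that(1)] pair_bound_sum_le_two_social_cost[of n S' \<alpha> w] that(2) assms
    by (simp add: nash_eq_def)
  ultimately show ?thesis by blast
qed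

end
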